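(* Let $I$ be a squarefree monomial ideal in a polynomial ring $S$ over a field that is nearly a complete intersection (NCI), and let $F$ be a minimal monomial generator of $I$. Then $F$ has a nontrivial common factor with some other minimal monomial generator of $I$.
   Context: An ideal is a complete intersection (CI) if it is generated by a regular sequence. The support of a monomial ideal is the set of variables appearing in at least one minimal monomial generator. For a squarefree monomial ideal $I$ and a variable $x$, $I(x=1)$ denotes the ideal generated by the monomials obtained from the minimal monomial generators of $I$ by setting $x = 1$. A squarefree monomial ideal $I$ is NCI if it is generated in degree at least two, is not a CI, and for each variable $x$ in the support of $I$, $I(x=1)$ is a CI. *)

theory Defs
  imports "HOL-Library.Poly_Mapping"
begin

text \<open>The polynomial ring S over a field k is modelled as exponent vectors (finitely supported maps from variables to nat) mapped to coefficients.\<close>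
type_synonym ('v, 'k) mpoly = "('v \<Rightarrow>\<^sub>0 nat) \<Rightarrow>\<^sub>0 'k"

definition gen_ideal :: "'a::comm_ring_1 set \<Rightarrow> 'a set" where
  "gen_ideal G = {x. \<exists>A c. finite A \<and> A \<subseteq> G \<and> x = (\<Sum>g\<in>A. c g * g)}"

definition regular_seq :: "'a::comm_ring_1 list \<Rightarrow> bool" where
  "regular_seq fs \<longleftrightarrow>
     (\<forall>i < length fs. \<forall>a. a * fs ! i \<in> gen_ideal (set (take i fs))
          \<longrightarrow> a \<in> gen_ideal (set (take i fs)))
     \<and> 1 \<notin> gen_ideal (set fs)"

definition is_CI :: "'a::comm_ring_1 set \<Rightarrow> bool" where
  "is_CI I \<longleftrightarrow> (\<exists>fs. regular_seq fs \<and> gen_ideal (set fs) = I)"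

definition monom :: "('v \<Rightarrow>\<^sub>0 nat) \<Rightarrow> ('v, 'k::field) mpoly" where
  "monom m = Poly_Mapping.single m 1"

definition squarefree_exp :: "('v \<Rightarrow>\<^sub>0 nat) \<Rightarrow> bool" where
  "squarefree_exp m \<longleftrightarrow> (\<forall>v. Poly_Mapping.lookup m v \<le> 1)"

definition total_deg :: "('v \<Rightarrow>\<^sub>0 nat) \<Rightarrow> nat" where
  "total_deg m = (\<Sum>v\<in>Poly_Mapping.keys m. Poly_Mapping.lookup m v)"

definition sqfree_monomial_ideal :: "('v, 'k::field) mpoly set \<Rightarrow> bool" where
  "sqfree_monomial_ideal I \<longleftrightarrow>
     (\<exists>E. (\<forall>m\<in>E. squarefree_exp m) \<and> I = gen_ideal (monom ` E))"

definition mingen_exps :: "('v, 'k::field) mpoly set \<Rightarrow> ('v \<Rightarrow>\<^sub>0 nat) set" where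
  "mingen_exps I = {m. (monom m :: ('v,'k) mpoly) \<in> I \<and>
      (\<forall>m'. (monom m' :: ('v,'k) mpoly) \<in> I \<longrightarrow> monom m' dvd (monom m :: ('v,'k) mpoly)
             \<longrightarrow> m' = m)}"

definition mingens :: "('v, 'k::field) mpoly set \<Rightarrow> ('v, 'k) mpoly set" where
  "mingens I = monom ` mingen_exps I"

definition supp_ideal :: "('v, 'k::field) mpoly set \<Rightarrow> 'v set" where
  "supp_ideal I = (\<Union>m\<in>mingen_exps I. Poly_Mapping.keys m)"

definition set_var_one :: "'v \<Rightarrow> ('v, 'k::field) mpoly set \<Rightarrow> ('v, 'k) mpoly set" where
  "set_var_one x I = gen_ideal ((\<lambda>m. monom (Poly_Mapping.update x 0 m)) ` mingen_exps I)"

definition is_NCI :: "('v, 'k::field) mpoly set \<Rightarrow> bool" where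
  "is_NCI I \<longleftrightarrow> sqfree_monomial_ideal I
     \<and> (\<forall>m\<in>mingen_exps I. total_deg m \<ge> 2)
     \<and> \<not> is_CI I
     \<and> (\<forall>x\<in>supp_ideal I. is_CI (set_var_one x I))"

end

theory Submission
  imports Defs
begin

text \<open>Suppose a minimal generator F shares no variable with the other minimal generators.
  Being squarefree of degree at least two, F = x y F' with x \<noteq> y. The substitution
  \<theta>: x \<mapsto> x + y, y \<mapsto> xy, fixing all other variables, sends the generators of I(x=1),
  namely y F' and the remaining minimal generators (which avoid x and y), onto the minimal
  generators of I. The polynomial ring is free over the image of \<theta> with basis 1, y, so
  \<theta> maps regular sequences to regular sequences; hence the complete intersection I(x=1)
  is carried to a complete intersection presentation of I, contradicting that I is not a CI.\<close>

abbreviation lookup where "lookup \<equiv> Poly_Mapping.lookup"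
abbreviation single where "single \<equiv> Poly_Mapping.single"
abbreviation keys where "keys \<equiv> Poly_Mapping.keys"

lemma gen_ideal_intro:
  "finite A \<Longrightarrow> A \<subseteq> G \<Longrightarrow> x = (\<Sum>g\<in>A. c g * g) \<Longrightarrow> x \<in> gen_ideal G"
  unfolding gen_ideal_def by blast

lemma gen_ideal_elim:
  assumes "x \<in> gen_ideal G"
  obtains A c where "finite A" "A \<subseteq> G" "x = (\<Sum>g\<in>A. c g * g)"
  using assms unfolding gen_ideal_def by blast

lemma gen_ideal_0: "0 \<in> gen_ideal G"
  by (rule gen_ideal_intro[of "{}"]) auto

lemma gen_ideal_base: "g \<in> G \<Longrightarrow> g \<in> gen_ideal G"
  by (rule gen_ideal_intro[of "{g}" _ _ "\<lambda>_. 1"]) auto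

lemma gen_ideal_add:
  assumes "x \<in> gen_ideal G" "y \<in> gen_ideal G"
  shows "x + y \<in> gen_ideal G"
proof -
  from assms(1) obtain A c where A: "finite A" "A \<subseteq> G" "x = (\<Sum>g\<in>A. c g * g)"
    by (rule gen_ideal_elim)
  from assms(2) obtain B d where B: "finite B" "B \<subseteq> G" "y = (\<Sum>g\<in>B. d g * g)"
    by (rule gen_ideal_elim)
  define c' where "c' g = (if g \<in> A then c g else 0)" for g
  define d' where "d' g = (if g \<in> B then d g else 0)" for g
  have "x = (\<Sum>g\<in>A \<union> B. c' g * g)"
    unfolding A(3) c'_def by (rule sum.mono_neutral_cong_left) (use A B in auto)
  moreover have "y = (\<Sum>g\<in>A \<union> B. d' g * g)"
    unfolding B(3) d'_def by (rule sum.mono_neutral_cong_left) (use A B in auto)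
  ultimately have "x + y = (\<Sum>g\<in>A \<union> B. (c' g + d' g) * g)"
    by (simp add: distrib_right sum.distrib)
  then show ?thesis
    using A B by (intro gen_ideal_intro) auto
qed

lemma gen_ideal_mult: "x \<in> gen_ideal G \<Longrightarrow> r * x \<in> gen_ideal G"
  by (elim gen_ideal_elim, rule gen_ideal_intro[where c = "\<lambda>g. r * _ g"])
    (auto simp: sum_distrib_left mult.assoc)

lemma gen_ideal_sum:
  "(\<And>a. a \<in> A \<Longrightarrow> f a \<in> gen_ideal G) \<Longrightarrow> sum f A \<in> gen_ideal G"
  by (induction A rule: infinite_finite_induct) (auto simp: gen_ideal_0 gen_ideal_add)

lemma gen_ideal_subset: "G \<subseteq> gen_ideal H \<Longrightarrow> gen_ideal G \<subseteq> gen_ideal H"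
  by (auto elim!: gen_ideal_elim intro!: gen_ideal_sum gen_ideal_mult)

subsection \<open>Regular sequences under a free ring extension of rank two\<close>

definition is_ring_hom :: "('a::comm_ring_1 \<Rightarrow> 'b::comm_ring_1) \<Rightarrow> bool" where
  "is_ring_hom \<theta> \<longleftrightarrow>
     (\<forall>a b. \<theta> (a + b) = \<theta> a + \<theta> b) \<and> (\<forall>a b. \<theta> (a * b) = \<theta> a * \<theta> b) \<and> \<theta> 1 = 1"

lemma ring_hom_add: "is_ring_hom \<theta> \<Longrightarrow> \<theta> (a + b) = \<theta> a + \<theta> b"
  by (simp add: is_ring_hom_def)

lemma ring_hom_mult: "is_ring_hom \<theta> \<Longrightarrow> \<theta> (a * b) = \<theta> a * \<theta> b"
  by (simp add: is_ring_hom_def)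

lemma ring_hom_1: "is_ring_hom \<theta> \<Longrightarrow> \<theta> 1 = 1"
  by (simp add: is_ring_hom_def)

lemma ring_hom_0: "is_ring_hom \<theta> \<Longrightarrow> \<theta> 0 = 0"
  using ring_hom_add[of \<theta> 0 0] by simp

lemma ring_hom_diff: "is_ring_hom \<theta> \<Longrightarrow> \<theta> (a - b) = \<theta> a - \<theta> b"
  using ring_hom_add[of \<theta> "a - b" b] by (simp add: algebra_simps)

lemma ring_hom_uminus: "is_ring_hom \<theta> \<Longrightarrow> \<theta> (- a) = - \<theta> a"
  using ring_hom_diff[of \<theta> 0 a] by (simp add: ring_hom_0)

lemma ring_hom_sum: "is_ring_hom \<theta> \<Longrightarrow> \<theta> (sum f A) = (\<Sum>a\<in>A. \<theta> (f a))"
  by (induction A rule: infinite_finite_induct) (auto simp: ring_hom_0 ring_hom_add)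

lemma ring_hom_prod: "is_ring_hom \<theta> \<Longrightarrow> \<theta> (prod f A) = (\<Prod>a\<in>A. \<theta> (f a))"
  by (induction A rule: infinite_finite_induct) (auto simp: ring_hom_1 ring_hom_mult)

lemma ring_hom_power: "is_ring_hom \<theta> \<Longrightarrow> \<theta> (a ^ n) = \<theta> a ^ n"
  by (induction n) (auto simp: ring_hom_1 ring_hom_mult)

lemma gen_ideal_image:
  assumes "is_ring_hom \<theta>" "x \<in> gen_ideal G"
  shows "\<theta> x \<in> gen_ideal (\<theta> ` G)"
  using assms(2)
proof (rule gen_ideal_elim)
  fix A c assume A: "finite A" "A \<subseteq> G" "x = (\<Sum>g\<in>A. c g * g)"
  then have "\<theta> x = (\<Sum>g\<in>A. \<theta> (c g) * \<theta> g)"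
    using assms(1) by (simp add: ring_hom_sum ring_hom_mult)
  also have "\<dots> \<in> gen_ideal (\<theta> ` G)"
    using A(2) by (intro gen_ideal_sum gen_ideal_mult gen_ideal_base) blast
  finally show ?thesis .
qed

lemma gen_ideal_image_cong:
  assumes "is_ring_hom \<theta>" "gen_ideal G = gen_ideal H"
  shows "gen_ideal (\<theta> ` G) = gen_ideal (\<theta> ` H)"
proof -
  have "gen_ideal (\<theta> ` G) \<subseteq> gen_ideal (\<theta> ` H)" if "G \<subseteq> gen_ideal H" for G H
    using that gen_ideal_image[OF assms(1)] by (intro gen_ideal_subset) blast
  then show ?thesis
    using assms(2) gen_ideal_base by (metis subsetI subset_antisym)
qed

definition free_over_image :: "('a::comm_ring_1 \<Rightarrow> 'b::comm_ring_1) \<Rightarrow> 'b \<Rightarrow> bool" where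
  "free_over_image \<theta> Y \<longleftrightarrow>
     (\<forall>s. \<exists>a b. s = \<theta> a + \<theta> b * Y) \<and> (\<forall>a b. \<theta> a + \<theta> b * Y = 0 \<longrightarrow> a = 0 \<and> b = 0)"

lemma gen_ideal_reflect:
  assumes hom: "is_ring_hom \<theta>" and free: "free_over_image \<theta> Y"
    and mem: "\<theta> a + \<theta> b * Y \<in> gen_ideal (\<theta> ` G)"
  shows "a \<in> gen_ideal G \<and> b \<in> gen_ideal G"
proof -
  from mem obtain A c where A: "finite A" "A \<subseteq> \<theta> ` G" "\<theta> a + \<theta> b * Y = (\<Sum>g\<in>A. c g * g)"
    by (rule gen_ideal_elim)
  have "\<forall>g\<in>A. \<exists>h. h \<in> G \<and> \<theta> h = g"
    using A(2) by blast
  then obtain pre where pre: "\<And>g. g \<in> A \<Longrightarrow> pre g \<in> G \<and> \<theta> (pre g) = g"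
    by (metis bchoice)
  have "\<forall>g. \<exists>ab. c g = \<theta> (fst ab) + \<theta> (snd ab) * Y"
    using free unfolding free_over_image_def by simp
  then obtain ab where "\<And>g. c g = \<theta> (fst (ab g)) + \<theta> (snd (ab g)) * Y"
    by (metis choice)
  define \<alpha> where "\<alpha> g = fst (ab g)" for g
  define \<beta> where "\<beta> g = snd (ab g)" for g
  have dec: "c g = \<theta> (\<alpha> g) + \<theta> (\<beta> g) * Y" for g
    unfolding \<alpha>_def \<beta>_def by fact
  let ?a = "\<Sum>g\<in>A. \<alpha> g * pre g" and ?b = "\<Sum>g\<in>A. \<beta> g * pre g"
  have "(\<Sum>g\<in>A. c g * g) = (\<Sum>g\<in>A. \<theta> (\<alpha> g * pre g) + \<theta> (\<beta> g * pre g) * Y)"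
    using pre by (intro sum.cong) (auto simp: ring_hom_mult[OF hom] dec algebra_simps)
  also have "\<dots> = \<theta> ?a + \<theta> ?b * Y"
    by (simp add: sum.distrib ring_hom_sum[OF hom] sum_distrib_right)
  finally have "\<theta> (a - ?a) + \<theta> (b - ?b) * Y = 0"
    using A(3) by (simp add: ring_hom_diff[OF hom] algebra_simps)
  then have "a - ?a = 0" "b - ?b = 0"
    using free unfolding free_over_image_def by blast+
  moreover have "?a \<in> gen_ideal G" "?b \<in> gen_ideal G"
    using pre by (intro gen_ideal_sum gen_ideal_mult gen_ideal_base, blast)+
  ultimately show ?thesis by simp
qed

lemma regular_seq_map:
  assumes hom: "is_ring_hom \<theta>" and free: "free_over_image \<theta> Y" and reg: "regular_seq fs"
  shows "regular_seq (map \<theta> fs)"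
  unfolding regular_seq_def
proof (intro conjI allI impI)
  fix i u assume i: "i < length (map \<theta> fs)"
    and mem: "u * map \<theta> fs ! i \<in> gen_ideal (set (take i (map \<theta> fs)))"
  let ?G = "set (take i fs)"
  obtain a b where u: "u = \<theta> a + \<theta> b * Y"
    using free unfolding free_over_image_def by blast
  have "u * map \<theta> fs ! i = \<theta> (a * fs ! i) + \<theta> (b * fs ! i) * Y"
    using i by (simp add: u ring_hom_mult[OF hom] algebra_simps)
  with mem have "a * fs ! i \<in> gen_ideal ?G \<and> b * fs ! i \<in> gen_ideal ?G"
    by (intro gen_ideal_reflect[OF hom free]) (simp add: take_map)
  then have "a \<in> gen_ideal ?G" "b \<in> gen_ideal ?G"
    using reg i unfolding regular_seq_def by auto
  then show "u \<in> gen_ideal (set (take i (map \<theta> fs)))"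
    unfolding u take_map set_map
    by (intro gen_ideal_add gen_ideal_image[OF hom])
      (auto simp: mult.commute[of _ Y] intro: gen_ideal_mult gen_ideal_image[OF hom])
next
  show "1 \<notin> gen_ideal (set (map \<theta> fs))"
  proof
    assume "1 \<in> gen_ideal (set (map \<theta> fs))"
    then have "\<theta> 1 + \<theta> 0 * Y \<in> gen_ideal (\<theta> ` set fs)"
      by (simp add: ring_hom_1[OF hom] ring_hom_0[OF hom])
    then show False
      using gen_ideal_reflect[OF hom free] reg unfolding regular_seq_def by blast
  qed
qed

lemma is_CI_image:
  assumes "is_CI (gen_ideal G)" "is_ring_hom \<theta>" "free_over_image \<theta> Y"
  shows "is_CI (gen_ideal (\<theta> ` G))"
proof -
  obtain fs where "regular_seq fs" "gen_ideal (set fs) = gen_ideal G"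
    using assms(1) unfolding is_CI_def by blast
  then show ?thesis
    unfolding is_CI_def using assms(2,3)
    by (metis gen_ideal_image_cong regular_seq_map set_map)
qed

lemma lookup_single_mult_shift:
  fixes q :: "'a::cancel_comm_monoid_add \<Rightarrow>\<^sub>0 'b::semiring_1"
  shows "lookup (single a c * q) (a + d) = c * lookup q d"
proof -
  have "lookup (single a c * q) (a + d) = c * (\<Sum>e. lookup q e when a + d = a + e)"
    by (simp add: lookup_mult lookup_single when_mult)
  also have "(\<lambda>e. lookup q e when a + d = a + e) = (\<lambda>e. lookup q e when d = e)"
    by (auto simp: fun_eq_iff)
  finally show ?thesis by simp
qed

lemma lookup_single_mult_eq_0:
  fixes q :: "'a::cancel_comm_monoid_add \<Rightarrow>\<^sub>0 'b::semiring_1"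
  assumes "\<And>d. k \<noteq> a + d"
  shows "lookup (single a c * q) k = 0"
proof -
  have "lookup (single a c * q) k = c * (\<Sum>e. lookup q e when k = a + e)"
    by (simp add: lookup_mult lookup_single when_mult)
  also have "(\<lambda>e. lookup q e when k = a + e) = (\<lambda>e. 0)"
    using assms by (auto simp: fun_eq_iff)
  finally show ?thesis by simp
qed

lemma poly_mapping_sum_singles: "p = (\<Sum>m\<in>keys p. single m (lookup p m))"
  by (rule poly_mapping_eqI) (auto simp: lookup_sum lookup_single when_def in_keys_iff)

lemma poly_mapping_induct [case_names zero add single]:
  fixes p :: "'a \<Rightarrow>\<^sub>0 'b::comm_monoid_add"
  assumes "P 0" "\<And>p q. P p \<Longrightarrow> P q \<Longrightarrow> P (p + q)" "\<And>m c. P (single m c)"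
  shows "P p"
proof -
  have "P (\<Sum>m\<in>K. single m (lookup p m))" if "finite K" for K
    using that by (induction K rule: finite_induct) (auto intro: assms)
  then show ?thesis by (metis poly_mapping_sum_singles finite_keys)
qed

definition const_mpoly :: "'k \<Rightarrow> ('v, 'k::comm_ring_1) mpoly" where
  "const_mpoly c = single 0 c"

definition var :: "'v \<Rightarrow> ('v, 'k::comm_ring_1) mpoly" where
  "var v = single (single v 1) 1"

lemma const_mpoly_0 [simp]: "const_mpoly 0 = 0"
  by (simp add: const_mpoly_def)

lemma const_mpoly_1 [simp]: "const_mpoly 1 = 1"
  by (simp add: const_mpoly_def)

lemma const_mpoly_add: "const_mpoly (a + b) = const_mpoly a + const_mpoly b"
  by (simp add: const_mpoly_def single_add)

lemma const_mpoly_mult: "const_mpoly (a * b) = const_mpoly a * const_mpoly b"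
  by (simp add: const_mpoly_def mult_single)

definition eval_monom :: "('v::finite \<Rightarrow> ('v, 'k::comm_ring_1) mpoly) \<Rightarrow> ('v \<Rightarrow>\<^sub>0 nat) \<Rightarrow> ('v, 'k) mpoly" where
  "eval_monom \<sigma> m = (\<Prod>v\<in>UNIV. \<sigma> v ^ lookup m v)"

definition subst :: "('v::finite \<Rightarrow> ('v, 'k::comm_ring_1) mpoly) \<Rightarrow> ('v, 'k) mpoly \<Rightarrow> ('v, 'k) mpoly" where
  "subst \<sigma> p = (\<Sum>m\<in>keys p. const_mpoly (lookup p m) * eval_monom \<sigma> m)"

lemma eval_monom_0: "eval_monom \<sigma> 0 = 1"
  by (simp add: eval_monom_def)

lemma eval_monom_add: "eval_monom \<sigma> (a + b) = eval_monom \<sigma> a * eval_monom \<sigma> b"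
  by (simp add: eval_monom_def lookup_add power_add prod.distrib)

lemma var_power: "var v ^ k = single (single v k) 1"
  by (induction k) (simp_all add: var_def mult_single flip: single_add)

lemma eval_monom_var: "eval_monom var m = single m 1"
proof -
  have "(\<Prod>v\<in>A. var v ^ lookup m v) = single (\<Sum>v\<in>A. single v (lookup m v)) 1" for A
    by (induction A rule: infinite_finite_induct)
      (simp_all add: var_power mult_single add.commute)
  moreover have "(\<Sum>v\<in>UNIV. single v (lookup m v)) = m"
    by (rule poly_mapping_eqI) (simp add: lookup_sum lookup_single when_def)
  ultimately show ?thesis unfolding eval_monom_def by metis
qed

lemma subst_superset:
  assumes "finite K" "keys p \<subseteq> K"
  shows "subst \<sigma> p = (\<Sum>m\<in>K. const_mpoly (lookup p m) * eval_monom \<sigma> m)"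
  unfolding subst_def
  by (rule sum.mono_neutral_left) (use assms in \<open>auto simp: in_keys_iff\<close>)

lemma subst_single: "subst \<sigma> (single m c) = const_mpoly c * eval_monom \<sigma> m"
  using subst_superset[of "{m}" "single m c" \<sigma>] by simp

lemma subst_0: "subst \<sigma> 0 = 0"
  by (simp add: subst_def)

lemma subst_add: "subst \<sigma> (p + q) = subst \<sigma> p + subst \<sigma> q"
proof -
  let ?K = "keys p \<union> keys q"
  have "subst \<sigma> (p + q) = (\<Sum>m\<in>?K. const_mpoly (lookup (p + q) m) * eval_monom \<sigma> m)"
    using keys_add[of p q] by (intro subst_superset) auto
  also have "\<dots> = subst \<sigma> p + subst \<sigma> q"
    by (simp add: subst_superset[of ?K p] subst_superset[of ?K q] lookup_add const_mpoly_add
        distrib_right sum.distrib)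
  finally show ?thesis .
qed

lemma subst_mult: "subst \<sigma> (p * q) = subst \<sigma> p * subst \<sigma> q"
proof (induction p rule: poly_mapping_induct)
  case (single m c)
  show ?case
    by (induction q rule: poly_mapping_induct)
      (simp_all add: subst_0 subst_add distrib_left distrib_right mult_single subst_single const_mpoly_mult
        eval_monom_add mult_ac)
qed (simp_all add: subst_0 subst_add distrib_right)

lemma subst_1: "subst \<sigma> 1 = 1"
  using subst_single[of \<sigma> 0 1] by (simp add: eval_monom_0)

lemma is_ring_hom_subst: "is_ring_hom (subst \<sigma>)"
  by (simp add: is_ring_hom_def subst_add subst_mult subst_1)

lemma subst_var: "subst \<sigma> (var v) = \<sigma> v"
proof -
  have "eval_monom \<sigma> (single v 1) = (\<Prod>w\<in>UNIV. if w = v then \<sigma> v else 1)"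
    unfolding eval_monom_def by (rule prod.cong) (auto simp: lookup_single)
  then show ?thesis by (simp add: var_def subst_single)
qed

lemma subst_const_mpoly: "subst \<sigma> (const_mpoly c) = const_mpoly c"
  using subst_single[of \<sigma> 0 c] by (simp add: eval_monom_0 const_mpoly_def)

lemma subst_subst: "subst \<tau> (subst \<sigma> p) = subst (\<lambda>v. subst \<tau> (\<sigma> v)) p"
proof (induction p rule: poly_mapping_induct)
  case (single m c)
  have "subst \<tau> (eval_monom \<sigma> m) = eval_monom (\<lambda>v. subst \<tau> (\<sigma> v)) m"
    using is_ring_hom_subst[of \<tau>]
    by (simp add: eval_monom_def ring_hom_prod ring_hom_power)
  then show ?case by (simp add: subst_single subst_mult subst_const_mpoly)
qed (simp_all add: subst_0 subst_add)

definition set_var_zero :: "'v \<Rightarrow> ('v::finite, 'k::comm_ring_1) mpoly \<Rightarrow> ('v, 'k) mpoly" where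
  "set_var_zero v = subst (\<lambda>w. if w = v then 0 else var w)"

lemma set_var_zero_single:
  fixes v :: "'v::finite" and c :: "'k::comm_ring_1"
  shows "set_var_zero v (single m c) = (if lookup m v = 0 then single m c else 0)"
proof -
  have "eval_monom (\<lambda>w. if w = v then 0 else var w) m =
      (if lookup m v = 0 then eval_monom var m else (0 :: ('v, 'k) mpoly))"
    unfolding eval_monom_def by (auto intro!: prod.cong prod_zero bexI[of _ v] simp: power_0_left)
  then show ?thesis
    by (simp add: set_var_zero_def subst_single eval_monom_var const_mpoly_def mult_single)
qed

lemma lookup_set_var_zero:
  "lookup (set_var_zero v p) m = (if lookup m v = 0 then lookup p m else 0)"
  by (induction p rule: poly_mapping_induct)
    (simp_all add: set_var_zero_def subst_0 subst_add lookup_add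
      set_var_zero_single[unfolded set_var_zero_def] lookup_single when_def)

lemma lookup_var_mult: "lookup (var v * p) (single v 1 + d) = lookup p d"
  unfolding var_def by (simp add: lookup_single_mult_shift)

lemma var_mult_eq_0_iff: "var v * p = 0 \<longleftrightarrow> p = 0"
  by (metis lookup_var_mult mult_zero_right poly_mapping_eqI lookup_zero)

lemma var_dvd_if_set_var_zero:
  assumes "set_var_zero v p = 0"
  obtains q where "p = var v * q"
proof
  have v: "single v 1 + (m - single v 1) = m" if "m \<in> keys p" for m
  proof -
    have "lookup m v \<noteq> 0"
      using that assms lookup_set_var_zero[of v p m] by (auto simp: in_keys_iff split: if_splits)
    then show ?thesis
      by (intro poly_mapping_eqI) (auto simp: lookup_add lookup_minus lookup_single when_def)
  qed
  have "var v * (\<Sum>m\<in>keys p. single (m - single v 1) (lookup p m))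
      = (\<Sum>m\<in>keys p. single (single v 1 + (m - single v 1)) (lookup p m))"
    by (simp add: sum_distrib_left var_def mult_single)
  also have "\<dots> = p"
    using v by (simp flip: poly_mapping_sum_singles)
  finally show "p = var v * (\<Sum>m\<in>keys p. single (m - single v 1) (lookup p m))" ..
qed

lemma var_descent:
  assumes vanish: "\<And>p. P p \<Longrightarrow> set_var_zero v p = 0"
    and cancel: "\<And>q. P (var v * q) \<Longrightarrow> P q"
    and "P p"
  shows "p = 0"
proof -
  have "\<forall>p. (\<forall>m\<in>keys p. lookup m v < n) \<longrightarrow> P p \<longrightarrow> p = 0" for n
  proof (induction n)
    case (Suc n)
    show ?case
    proof (intro allI impI)
      fix p assume bound: "\<forall>m\<in>keys p. lookup m v < Suc n" and "P p"
      then obtain q where q: "p = var v * q"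
        using vanish var_dvd_if_set_var_zero by blast
      have "\<forall>d\<in>keys q. lookup d v < n"
      proof
        fix d assume "d \<in> keys q"
        then have "single v 1 + d \<in> keys p"
          by (metis q in_keys_iff lookup_var_mult)
        then show "lookup d v < n"
          using bound by (auto simp: lookup_add)
      qed
      then have "q = 0" using Suc.IH cancel \<open>P p\<close> q by blast
      then show "p = 0" by (simp add: q)
    qed
  qed simp
  moreover have "\<forall>m\<in>keys p. lookup m v < Suc (Max ((\<lambda>m. lookup m v) ` keys p))"
    by (simp add: le_imp_less_Suc)
  ultimately show ?thesis using \<open>P p\<close> by blast
qed

subsection \<open>The substitution x \<mapsto> x + y, y \<mapsto> xy\<close>

definition sym_subst :: "'v \<Rightarrow> 'v \<Rightarrow> 'v \<Rightarrow> ('v::finite, 'k::comm_ring_1) mpoly" where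
  "sym_subst x y v = (if v = x then var x + var y else if v = y then var x * var y else var v)"

definition swap_vars :: "'v \<Rightarrow> 'v \<Rightarrow> 'v \<Rightarrow> ('v::finite, 'k::comm_ring_1) mpoly" where
  "swap_vars x y v = (if v = x then var y else if v = y then var x else var v)"

context
  fixes x y :: "'v::finite"
  assumes xy: "x \<noteq> y"
begin

lemma subst_sym_subst_var:
  "subst (sym_subst x y) (var x :: ('v, 'k::comm_ring_1) mpoly) = var x + var y"
  "subst (sym_subst x y) (var y :: ('v, 'k::comm_ring_1) mpoly) = var x * var y"
  "w \<noteq> x \<Longrightarrow> w \<noteq> y \<Longrightarrow> subst (sym_subst x y) (var w :: ('v, 'k::comm_ring_1) mpoly) = var w"
  using xy by (simp_all add: subst_var sym_subst_def)

lemma set_var_zero_sym_subst: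
  "set_var_zero y (subst (sym_subst x y) p) = set_var_zero y (p :: ('v, 'k::comm_ring_1) mpoly)"
proof -
  have "(\<lambda>v. set_var_zero y (sym_subst x y v)) = (\<lambda>w. if w = y then 0 else var w :: ('v, 'k) mpoly)"
    using xy by (auto simp: fun_eq_iff set_var_zero_def sym_subst_def subst_add subst_mult subst_var)
  then show ?thesis
    by (simp add: set_var_zero_def[of y] subst_subst)
qed

lemma sym_subst_eq_0_imp:
  "subst (sym_subst x y) p = (0 :: ('v, 'k::comm_ring_1) mpoly) \<Longrightarrow> p = 0"
proof (rule var_descent[of "\<lambda>p. subst (sym_subst x y) p = 0" y])
  show "set_var_zero y p = 0" if "subst (sym_subst x y) p = 0" for p :: "('v, 'k) mpoly"
    using that set_var_zero_sym_subst[of p] by (simp add: set_var_zero_def subst_0)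
  show "subst (sym_subst x y) q = 0" if "subst (sym_subst x y) (var y * q) = 0" for q :: "('v, 'k) mpoly"
    using that by (simp add: subst_mult subst_sym_subst_var mult.assoc var_mult_eq_0_iff)
qed

lemma var_diff_mult_eq_0_imp:
  "(var y - var x) * p = (0 :: ('v, 'k::comm_ring_1) mpoly) \<Longrightarrow> p = 0"
proof (rule var_descent[of "\<lambda>p. (var y - var x) * p = 0" x])
  show "set_var_zero x p = 0" if "(var y - var x) * p = 0" for p :: "('v, 'k) mpoly"
  proof -
    have "set_var_zero x ((var y - var x) * p) = var y * set_var_zero x p"
      using xy by (simp add: set_var_zero_def subst_mult ring_hom_diff[OF is_ring_hom_subst] subst_var)
    then show ?thesis
      using that by (simp add: set_var_zero_def subst_0 var_mult_eq_0_iff)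
  qed
  show "(var y - var x) * q = 0" if "(var y - var x) * (var x * q) = 0" for q :: "('v, 'k) mpoly"
    using that by (metis mult.left_commute var_mult_eq_0_iff)
qed

lemma subst_swap_sym_subst:
  "subst (swap_vars x y) (subst (sym_subst x y) p) = subst (sym_subst x y) (p :: ('v, 'k::comm_ring_1) mpoly)"
proof -
  have "(\<lambda>v. subst (swap_vars x y) (sym_subst x y v)) = (sym_subst x y :: 'v \<Rightarrow> ('v, 'k) mpoly)"
    using xy by (auto simp: fun_eq_iff swap_vars_def sym_subst_def subst_add subst_mult subst_var
        add.commute mult.commute)
  then show ?thesis by (simp add: subst_subst)
qed

text \<open>Applying the swap of x and y to a relation with coefficients a, b gives a second one
  differing by (y - x) b, which is therefore 0.\<close>

lemma sym_subst_independent: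
  fixes a b :: "('v, 'k::comm_ring_1) mpoly"
  assumes "subst (sym_subst x y) a + subst (sym_subst x y) b * var y = 0"
  shows "a = 0 \<and> b = 0"
proof -
  let ?t = "subst (sym_subst x y) :: ('v, 'k) mpoly \<Rightarrow> _"
  have "subst (swap_vars x y) (?t a + ?t b * var y) = 0"
    using assms by (simp add: subst_0)
  then have "?t a + ?t b * var x = 0"
    using xy by (simp add: subst_add subst_mult subst_swap_sym_subst subst_var swap_vars_def)
  moreover have "(var y - var x) * ?t b = (?t a + ?t b * var y) - (?t a + ?t b * var x)"
    by (simp add: algebra_simps)
  ultimately have "(var y - var x) * ?t b = 0"
    using assms by simp
  then have "b = 0"
    by (rule sym_subst_eq_0_imp[OF var_diff_mult_eq_0_imp])
  then show ?thesis
    using assms sym_subst_eq_0_imp by (simp add: subst_0)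
qed

definition sym_span :: "('v, 'k::comm_ring_1) mpoly set" where
  "sym_span = {subst (sym_subst x y) a + subst (sym_subst x y) b * var y | a b. True}"

lemma sym_spanI: "s = subst (sym_subst x y) a + subst (sym_subst x y) b * var y \<Longrightarrow> s \<in> sym_span"
  unfolding sym_span_def by blast

lemma sym_spanE:
  assumes "s \<in> sym_span"
  obtains a b where "s = subst (sym_subst x y) a + subst (sym_subst x y) b * var y"
  using assms unfolding sym_span_def by blast

lemma sym_span_add: "s \<in> sym_span \<Longrightarrow> t \<in> sym_span \<Longrightarrow> s + t \<in> sym_span"
  by (elim sym_spanE, rule sym_spanI[where a = "_ + _" and b = "_ + _"])
    (simp add: subst_add algebra_simps)

lemma sym_span_mult_const: "s \<in> sym_span \<Longrightarrow> const_mpoly c * s \<in> sym_span"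
  by (elim sym_spanE, rule sym_spanI[where a = "const_mpoly c * _" and b = "const_mpoly c * _"])
    (simp add: subst_mult subst_const_mpoly algebra_simps)

text \<open>The key identities are var y ^ 2 = (var x + var y) var y - var x var y and
  var x = (var x + var y) - var y.\<close>

lemma sym_span_mult_var: "s \<in> sym_span \<Longrightarrow> var w * s \<in> sym_span"
proof -
  assume "s \<in> sym_span"
  then obtain a b where s: "s = subst (sym_subst x y) a + subst (sym_subst x y) b * var y"
    by (rule sym_spanE)
  consider "w = x" | "w = y" | "w \<noteq> x" "w \<noteq> y" by blast
  then have "\<exists>a' b'. var w * s = subst (sym_subst x y) a' + subst (sym_subst x y) b' * var y"
  proof cases
    case 1
    show ?thesis
      by (intro exI[of _ "var x * a + var y * b"] exI[of _ "- a"])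
        (simp add: s 1 subst_add subst_mult ring_hom_uminus[OF is_ring_hom_subst]
          subst_sym_subst_var algebra_simps)
  next
    case 2
    show ?thesis
      by (intro exI[of _ "- (var y * b)"] exI[of _ "a + var x * b"])
        (simp add: s 2 subst_add subst_mult ring_hom_uminus[OF is_ring_hom_subst]
          subst_sym_subst_var algebra_simps)
  next
    case 3
    show ?thesis
      by (intro exI[of _ "var w * a"] exI[of _ "var w * b"])
        (simp add: s 3 subst_add subst_mult subst_sym_subst_var algebra_simps)
  qed
  then show ?thesis
    by (metis sym_spanI)
qed

lemma sym_span_UNIV: "(sym_span :: ('v, 'k::comm_ring_1) mpoly set) = UNIV"
proof -
  have pow: "var w ^ n * s \<in> sym_span" if "s \<in> sym_span" for w n and s :: "('v, 'k) mpoly"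
    using that by (induction n) (simp_all add: mult.assoc sym_span_mult_var)
  have prod: "(\<Prod>w\<in>A. var w ^ k w) * s \<in> sym_span" if "s \<in> sym_span"
    for A k and s :: "('v, 'k) mpoly"
    using that by (induction A arbitrary: s rule: infinite_finite_induct) (simp_all add: mult.assoc pow)
  have one: "(1 :: ('v, 'k) mpoly) \<in> sym_span"
    by (rule sym_spanI[where a = 1 and b = 0]) (simp add: subst_1 subst_0)
  have "single m c = const_mpoly c * (eval_monom var m * 1)" for m and c :: 'k
    by (simp add: eval_monom_var const_mpoly_def mult_single)
  then have "single m c \<in> sym_span" for m and c :: 'k
    using sym_span_mult_const[OF prod[OF one]] by (metis eval_monom_def)
  moreover have "(0 :: ('v, 'k) mpoly) \<in> sym_span"
    by (rule sym_spanI[where a = 0 and b = 0]) (simp add: subst_0)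
  ultimately have "p \<in> sym_span" for p :: "('v, 'k) mpoly"
    by (induction p rule: poly_mapping_induct) (simp_all add: sym_span_add)
  then show ?thesis by blast
qed

lemma free_over_image_sym_subst: "free_over_image (subst (sym_subst x y)) (var y)"
  unfolding free_over_image_def
  using sym_span_UNIV sym_subst_independent by (metis UNIV_I sym_spanE)

end

lemma monom_add: "(monom (a + b) :: ('v, 'k::field) mpoly) = monom a * monom b"
  by (simp add: monom_def mult_single)

lemma monom_0: "(monom 0 :: ('v, 'k::field) mpoly) = 1"
  by (simp add: monom_def)

lemma monom_eq_iff: "(monom a :: ('v, 'k::field) mpoly) = monom b \<longleftrightarrow> a = b"
  unfolding monom_def by (metis lookup_single_eq lookup_single_not_eq one_neq_zero)

lemma monom_dvd_monom_iff: "(monom a :: ('v, 'k::field) mpoly) dvd monom b \<longleftrightarrow> (\<exists>d. b = a + d)"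
proof
  assume "monom a dvd (monom b :: ('v, 'k) mpoly)"
  then obtain q where q: "(monom b :: ('v, 'k) mpoly) = monom a * q" ..
  show "\<exists>d. b = a + d"
  proof (rule ccontr)
    assume "\<nexists>d. b = a + d"
    then have "lookup (monom a * q) b = 0"
      unfolding monom_def by (intro lookup_single_mult_eq_0) blast
    then show False
      using q unfolding monom_def by (metis lookup_single_eq zero_neq_one)
  qed
qed (auto simp: monom_add)

lemma var_eq_monom: "(var v :: ('v, 'k::field) mpoly) = monom (single v 1)"
  by (simp add: var_def monom_def)

lemma var_dvd_monom:
  assumes "lookup m v \<noteq> 0"
  shows "(var v :: ('v, 'k::field) mpoly) dvd monom m"
proof -
  have "m = single v 1 + (m - single v 1)"
    using assms by (intro poly_mapping_eqI) (auto simp: lookup_add lookup_minus lookup_single when_def)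
  then show ?thesis
    unfolding var_eq_monom monom_dvd_monom_iff by blast
qed

lemma var_not_dvd_1: "\<not> (var v :: ('v, 'k::field) mpoly) dvd 1"
  unfolding var_eq_monom monom_0[symmetric] monom_dvd_monom_iff
  by (metis lookup_add lookup_single_eq lookup_zero add_is_0 one_neq_zero)

lemma subst_monom: "subst \<sigma> (monom m :: ('v::finite, 'k::field) mpoly) = eval_monom \<sigma> m"
  by (simp add: monom_def subst_single)

lemma subst_monom_fixed:
  assumes "\<And>v. lookup m v \<noteq> 0 \<Longrightarrow> \<sigma> v = var v"
  shows "subst \<sigma> (monom m :: ('v::finite, 'k::field) mpoly) = monom m"
proof -
  have "eval_monom \<sigma> m = eval_monom var m"
    unfolding eval_monom_def by (rule prod.cong) (metis assms power_0)+
  then show ?thesis by (metis subst_monom eval_monom_var monom_def)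
qed

lemma monom_mem_gen_ideal_monoms:
  assumes "(monom f :: ('v, 'k::field) mpoly) \<in> gen_ideal (monom ` E)"
  shows "\<exists>e\<in>E. \<exists>d. f = e + d"
proof (rule ccontr)
  assume no_divisor: "\<not> (\<exists>e\<in>E. \<exists>d. f = e + d)"
  from assms obtain A c where A: "finite A" "A \<subseteq> monom ` E" "(monom f :: ('v, 'k) mpoly) = (\<Sum>g\<in>A. c g * g)"
    by (rule gen_ideal_elim)
  have "lookup (c g * g) f = 0" if "g \<in> A" for g
  proof -
    obtain e where e: "e \<in> E" "g = monom e" using A(2) \<open>g \<in> A\<close> by blast
    have "lookup (single e 1 * c g) f = 0"
      by (rule lookup_single_mult_eq_0) (use no_divisor e in blast)
    then show ?thesis
      using e by (simp add: monom_def mult.commute)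
  qed
  then have "lookup (monom f :: ('v, 'k) mpoly) f = 0"
    unfolding A(3) by (simp add: lookup_sum)
  then show False by (simp add: monom_def)
qed

lemma mingen_exps_subset:
  assumes "I = gen_ideal (monom ` E :: ('v, 'k::field) mpoly set)"
  shows "mingen_exps I \<subseteq> E"
proof
  fix f assume "f \<in> mingen_exps I"
  then have f: "(monom f :: ('v, 'k) mpoly) \<in> gen_ideal (monom ` E)"
    and minimal: "\<And>m'. (monom m' :: ('v, 'k) mpoly) \<in> I \<Longrightarrow> monom m' dvd (monom f :: ('v, 'k) mpoly) \<Longrightarrow> m' = f"
    using assms by (simp_all add: mingen_exps_def)
  then obtain e d where e: "e \<in> E" "f = e + d"
    using monom_mem_gen_ideal_monoms by blast
  have "e = f"
  proof (rule minimal)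
    show "(monom e :: ('v, 'k) mpoly) \<in> I"
      using assms e(1) by (simp add: gen_ideal_base)
    show "(monom e :: ('v, 'k) mpoly) dvd monom f"
      using e(2) monom_dvd_monom_iff by blast
  qed
  with e(1) show "f \<in> E" by simp
qed

lemma total_deg_superset:
  "finite K \<Longrightarrow> keys m \<subseteq> K \<Longrightarrow> total_deg m = (\<Sum>v\<in>K. lookup m v)"
  unfolding total_deg_def by (rule sum.mono_neutral_left) (auto simp: in_keys_iff)

lemma total_deg_add: "total_deg (a + b) = total_deg a + total_deg b"
proof -
  let ?K = "keys a \<union> keys b"
  have "keys (a + b) \<subseteq> ?K" by (rule keys_add)
  then show ?thesis
    by (simp add: total_deg_superset[of ?K] lookup_add sum.distrib)
qed

lemma total_deg_eq_0_iff: "total_deg m = 0 \<longleftrightarrow> m = 0"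
  by (auto simp: total_deg_def in_keys_iff intro: poly_mapping_eqI)

text \<open>A divisor of least degree in I of a monomial of I is a minimal generator.\<close>

lemma gen_ideal_mingens:
  assumes I: "I = gen_ideal (monom ` E :: ('v, 'k::field) mpoly set)"
  shows "gen_ideal (mingens I) = I"
proof
  have "mingens I \<subseteq> I" by (auto simp: mingens_def mingen_exps_def)
  then show "gen_ideal (mingens I) \<subseteq> I"
    using gen_ideal_subset I by blast
next
  have "monom e \<in> gen_ideal (mingens I)" if "e \<in> E" for e
  proof -
    let ?S = "{m. (monom m :: ('v, 'k) mpoly) \<in> I \<and> (\<exists>d. e = m + d)}"
    have "e \<in> ?S" using that I by (auto intro!: gen_ideal_base)
    then obtain m where m: "m \<in> ?S" and least: "\<And>m'. m' \<in> ?S \<Longrightarrow> total_deg m \<le> total_deg m'"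
      using ex_has_least_nat[of "\<lambda>m. m \<in> ?S" e total_deg] by blast
    obtain d where d: "e = m + d" using m by blast
    have "m \<in> mingen_exps I"
      unfolding mingen_exps_def
    proof (intro CollectI conjI allI impI)
      show "(monom m :: ('v, 'k) mpoly) \<in> I" using m by blast
    next
      fix m' assume "(monom m' :: ('v, 'k) mpoly) \<in> I" "monom m' dvd (monom m :: ('v, 'k) mpoly)"
      then obtain d' where d': "m = m' + d'" and "m' \<in> ?S"
        using d by (auto simp: monom_dvd_monom_iff add.assoc)
      then have "total_deg d' = 0"
        using least[of m'] by (simp add: total_deg_add)
      then show "m' = m"
        by (simp add: d' total_deg_eq_0_iff)
    qed
    then have "monom d * monom m \<in> gen_ideal (mingens I)"
      by (intro gen_ideal_mult gen_ideal_base) (simp add: mingens_def)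
    then show ?thesis
      by (simp add: d monom_add mult.commute)
  qed
  then have "gen_ideal (monom ` E) \<subseteq> gen_ideal (mingens I)"
    by (intro gen_ideal_subset) blast
  then show "I \<subseteq> gen_ideal (mingens I)"
    using I by simp
qed

lemma squarefree_two_vars:
  assumes "squarefree_exp f" "total_deg f \<ge> 2"
  obtains x y where "x \<noteq> y" "lookup f x = 1" "lookup f y = 1"
proof -
  have one: "lookup f v = 1" if "v \<in> keys f" for v
    using that assms(1) unfolding squarefree_exp_def in_keys_iff by (metis le_neq_implies_less less_one)
  then have "total_deg f = card (keys f)"
    by (simp add: total_deg_def)
  then have "\<not> (\<forall>x\<in>keys f. \<forall>y\<in>keys f. x = y)"
    using assms(2) card_le_Suc0_iff_eq[of "keys f"] by auto
  then obtain x y where "x \<in> keys f" "y \<in> keys f" "x \<noteq> y"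
    by blast
  then show ?thesis using one that by blast
qed

lemma sym_subst_monom_update:
  assumes "x \<noteq> y" "lookup f x = 1" "lookup f y = 1"
  shows "subst (sym_subst x y) (monom (Poly_Mapping.update x 0 f) :: ('v::finite, 'k::field) mpoly) = monom f"
proof -
  define h where "h = Poly_Mapping.update y 0 (Poly_Mapping.update x 0 f)"
  have f: "f = single x 1 + single y 1 + h"
    using assms by (intro poly_mapping_eqI) (auto simp: h_def lookup_add lookup_update lookup_single when_def)
  have g: "Poly_Mapping.update x 0 f = single y 1 + h"
    using assms by (intro poly_mapping_eqI) (auto simp: h_def lookup_add lookup_update lookup_single when_def)
  have h: "subst (sym_subst x y) (monom h :: ('v, 'k) mpoly) = monom h"
    by (rule subst_monom_fixed) (auto simp: h_def sym_subst_def lookup_update split: if_splits)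
  have "(monom (Poly_Mapping.update x 0 f) :: ('v, 'k) mpoly) = var y * monom h"
    by (simp add: g monom_add var_eq_monom)
  then have "subst (sym_subst x y) (monom (Poly_Mapping.update x 0 f) :: ('v, 'k) mpoly)
      = var x * var y * monom h"
    by (simp add: subst_mult h subst_sym_subst_var[OF assms(1)])
  also have "\<dots> = monom f"
    by (simp add: f monom_add var_eq_monom)
  finally show ?thesis .
qed

lemma sym_subst_image_update_monoms:
  assumes "x \<noteq> y" "lookup f x = 1" "lookup f y = 1"
    and "\<And>g. g \<in> M \<Longrightarrow> g \<noteq> f \<Longrightarrow> lookup g x = 0 \<and> lookup g y = 0"
  shows "subst (sym_subst x y) ` (\<lambda>m. monom (Poly_Mapping.update x 0 m)) ` M
    = (monom ` M :: ('v::finite, 'k::field) mpoly set)"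
  unfolding image_image
proof (rule image_cong[OF refl])
  fix g assume "g \<in> M"
  show "subst (sym_subst x y) (monom (Poly_Mapping.update x 0 g)) = (monom g :: ('v, 'k) mpoly)"
  proof (cases "g = f")
    case True
    then show ?thesis using sym_subst_monom_update assms(1-3) by blast
  next
    case False
    with assms(4) \<open>g \<in> M\<close> have "lookup g x = 0" "lookup g y = 0" by auto
    then have "Poly_Mapping.update x 0 g = g"
      by (intro poly_mapping_eqI) (auto simp: lookup_update)
    moreover have "subst (sym_subst x y) (monom g :: ('v, 'k) mpoly) = monom g"
      using \<open>lookup g x = 0\<close> \<open>lookup g y = 0\<close>
      by (intro subst_monom_fixed) (auto simp: sym_subst_def)
    ultimately show ?thesis by simp
  qed
qed

theorem lemma4p2:
  fixes I :: "('v::finite, 'k::field) mpoly set"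
    and F :: "('v, 'k) mpoly"
  assumes "sqfree_monomial_ideal I"
    and "is_NCI I"
    and "F \<in> mingens I"
  shows "\<exists>G\<in>mingens I. G \<noteq> F \<and> (\<exists>h. \<not> h dvd 1 \<and> h dvd F \<and> h dvd G)"
proof (rule ccontr)
  assume no_common_factor: "\<not> ?thesis"
  obtain f where f: "f \<in> mingen_exps I" "F = monom f"
    using assms(3) by (auto simp: mingens_def)
  obtain E where E: "\<forall>m\<in>E. squarefree_exp m" "I = gen_ideal (monom ` E)"
    using assms(1) unfolding sqfree_monomial_ideal_def by blast
  have "f \<in> E"
    using mingen_exps_subset[OF E(2)] f(1) by blast
  then have "squarefree_exp f"
    using E(1) by blast
  moreover have "total_deg f \<ge> 2"
    using assms(2) f(1) unfolding is_NCI_def by blast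
  ultimately obtain x y where xy: "x \<noteq> y" "lookup f x = 1" "lookup f y = 1"
    by (rule squarefree_two_vars)
  have disjoint: "lookup g v = 0" if "g \<in> mingen_exps I" "g \<noteq> f" "lookup f v \<noteq> 0" for g v
  proof (rule ccontr)
    assume "lookup g v \<noteq> 0"
    then have "var v dvd F" "var v dvd (monom g :: ('v, 'k) mpoly)"
      using \<open>lookup f v \<noteq> 0\<close> f(2) by (simp_all add: var_dvd_monom)
    moreover have "monom g \<in> mingens I" "monom g \<noteq> F"
      using that(1,2) f(2) by (simp_all add: mingens_def monom_eq_iff)
    ultimately show False
      using no_common_factor var_not_dvd_1[of v] by auto
  qed
  have "x \<in> supp_ideal I"
    using f(1) xy(2) unfolding supp_ideal_def by (intro UN_I[of f]) (auto simp: in_keys_iff)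
  then have "is_CI (set_var_one x I)"
    using assms(2) unfolding is_NCI_def by blast
  then have "is_CI (gen_ideal (subst (sym_subst x y) `
      (\<lambda>m. monom (Poly_Mapping.update x 0 m) :: ('v, 'k) mpoly) ` mingen_exps I))"
    unfolding set_var_one_def
    by (rule is_CI_image[OF _ is_ring_hom_subst free_over_image_sym_subst[OF xy(1)]])
  also have "subst (sym_subst x y) ` (\<lambda>m. monom (Poly_Mapping.update x 0 m) :: ('v, 'k) mpoly) ` mingen_exps I
      = mingens I"
    unfolding mingens_def using xy disjoint by (intro sym_subst_image_update_monoms) auto
  finally show False
    using assms(2) gen_ideal_mingens[OF E(2)] unfolding is_NCI_def by simp
qed

end
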